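(* Let $N\ge2$. Let $\mathbf s=[s_1,\dots,s_{2^N}]^{\mathrm T}$ be given in TT format: $s_{(k_1,\dots,k_N)}=\sum_{r_1=1}^{R_1}\cdots\sum_{r_{N-1}=1}^{R_{N-1}}s^{(1)}_{1,k_1,r_1}s^{(2)}_{r_1,k_2,r_2}\cdots s^{(N)}_{r_{N-1},k_N,1}$ for $k_m\in\{1,2\}$, with $R_0=R_N=1$. Let $\mathbf H\in\mathbb R^{2^N\times2^N}$ be the upper anti-triangular Hankel matrix with entries $\mathbf H_{ij}=s_{2^N+1-i-j}$ if $i+j\le 2^N$ and $\mathbf H_{ij}=0$ otherwise (so its first row is $(s_{2^N-1},\dots,s_1,0)$). Let $$\mathbf P=\begin{bmatrix}0&1\\1&0\end{bmatrix},\quad\mathbf Q=\begin{bmatrix}1&0\\0&0\end{bmatrix},\quad\mathbf R=\begin{bmatrix}0&0\\0&1\end{bmatrix},$$ and define the block matrices $$\widetilde{\mathbf M}^{(N)}_1=\begin{bmatrix}\mathbf P&\mathbf Q\end{bmatrix},\ \widetilde{\mathbf M}^{(n)}_1=\begin{bmatrix}\mathbf P&\mathbf Q\\\mathbf 0&\mathbf R\end{bmatrix}\ (2\le n\le N-1),\ \widetilde{\mathbf M}^{(1)}_1=\begin{bmatrix}\mathbf Q\\\mathbf R\end{bmatrix},$$ $$\widetilde{\mathbf M}^{(N)}_2=\begin{bmatrix}\mathbf Q&\mathbf 0\end{bmatrix},\ \widetilde{\mathbf M}^{(n)}_2=\begin{bmatrix}\mathbf Q&\mathbf 0\\\mathbf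 R&\mathbf P\end{bmatrix}\ (2\le n\le N-1),\ \widetilde{\mathbf M}^{(1)}_2=\begin{bmatrix}\mathbf 0\\\mathbf P\end{bmatrix}.$$ Denote by $\mathbf M^{(n)}_{q_n,k,q_{n-1}}\in\mathbb R^{2\times2}$ the $(q_n,q_{n-1})$-th $2\times2$ block of $\widetilde{\mathbf M}^{(n)}_k$ (so $q_N=1$, $q_0=1$, and $q_n\in\{1,2\}$ for $1\le n\le N-1$). For $t_n=(r_n,q_n)$ define $$\mathbf H^{(n)}_{t_n,t_{n-1}}=\mathbf H^{(n)}_{(r_n,q_n),(r_{n-1},q_{n-1})}=\sum_{k=1}^{2}s^{(n)}_{r_{n-1},k,r_n}\mathbf M^{(n)}_{q_n,k,q_{n-1}}\in\mathbb R^{2\times2},$$ with $t_N=t_0=1$ meaning $(r,q)=(1,1)$. Then $$\mathbf H=\sum_{t_1}\cdots\sum_{t_{N-1}}\mathbf H^{(N)}_{1,t_{N-1}}\otimes\mathbf H^{(N-1)}_{t_{N-1},t_{N-2}}\otimes\cdots\otimes\mathbf H^{(1)}_{t_1,1},$$ where each $t_n$ ranges over the $2R_n$ pairs $(r_n,q_n)\in\{1,\dots,R_n\}\times\{1,2\}$.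
   Context: Multi-index convention: $(k_1,\dots,k_N)=k_1+2(k_2-1)+\cdots+2^{N-1}(k_N-1)$ for $k_m\in\{1,2\}$. $\otimes$ denotes the Kronecker product; in a Kronecker product $\mathbf X\otimes\mathbf Y$ the index of $\mathbf Y$ varies fastest. *)

theory Defs
  imports Complex_Main
begin

text \<open>Matrices are functions nat => nat => real with 0-based entry
indices; their dimensions are tracked separately. Everything else (TT cores,
ranks, multi-indices k_m, vector index of s, r_n, q_n) is 1-based as in the paper.
TT cores: s n r k r' is the entry s^{(n)}_{r,k,r'} (r in 1..R(n-1), k in 1..2,
r' in 1..R n).\<close>

type_synonym rmat = "nat \<Rightarrow> nat \<Rightarrow> real"

definition tt_ranks :: "nat \<Rightarrow> (nat \<Rightarrow> nat) \<Rightarrow> (nat \<Rightarrow> nat) set" where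
  "tt_ranks N R = {r. r 0 = 1 \<and> r N = 1 \<and> (\<forall>n. 0 < n \<and> n < N \<longrightarrow> r n \<in> {1..R n})
                      \<and> (\<forall>n>N. r n = 1)}"

definition tt_entry :: "nat \<Rightarrow> (nat \<Rightarrow> nat) \<Rightarrow> (nat \<Rightarrow> nat \<Rightarrow> nat \<Rightarrow> nat \<Rightarrow> real)
                         \<Rightarrow> (nat \<Rightarrow> nat) \<Rightarrow> real" where
  "tt_entry N R s k = (\<Sum>r\<in>tt_ranks N R. \<Prod>n\<in>{1..N}. s n (r (n - 1)) (k n) (r n))"

definition multi_idx :: "nat \<Rightarrow> nat \<Rightarrow> nat" where
  "multi_idx i m = ((i - 1) div 2 ^ (m - 1)) mod 2 + 1"

definition svec :: "nat \<Rightarrow> (nat \<Rightarrow> nat) \<Rightarrow> (nat \<Rightarrow> nat \<Rightarrow> nat \<Rightarrow> nat \<Rightarrow> real) \<Rightarrow> nat \<Rightarrow> real" where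
  "svec N R s i = tt_entry N R s (multi_idx i)"

text \<open>Upper anti-triangular Hankel matrix (2^N x 2^N): with 1-based i', j',
H_{i'j'} = s_{2^N+1-i'-j'} if i'+j' <= 2^N, else 0. Here 0-based i = i'-1, j = j'-1.\<close>
definition hankel :: "nat \<Rightarrow> (nat \<Rightarrow> nat) \<Rightarrow> (nat \<Rightarrow> nat \<Rightarrow> nat \<Rightarrow> nat \<Rightarrow> real) \<Rightarrow> rmat" where
  "hankel N R s = (\<lambda>i j. if (i + 1) + (j + 1) \<le> 2 ^ N
                         then svec N R s (2 ^ N + 1 - (i + 1) - (j + 1)) else 0)"

definition Pm :: rmat where
  "Pm = (\<lambda>i j. if (i = 0 \<and> j = 1) \<or> (i = 1 \<and> j = 0) then 1 else 0)"
definition Qm :: rmat where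
  "Qm = (\<lambda>i j. if i = 0 \<and> j = 0 then 1 else 0)"
definition Rm :: rmat where
  "Rm = (\<lambda>i j. if i = 1 \<and> j = 1 then 1 else 0)"
definition Zm :: rmat where
  "Zm = (\<lambda>i j. 0)"

text \<open>Mblk N n q k q' = M^{(n)}_{q,k,q'}: the (q,q')-th 2x2 block of the block matrix
tilde M^{(n)}_k (1-based block indices), as specified in the paper.\<close>
definition Mblk :: "nat \<Rightarrow> nat \<Rightarrow> nat \<Rightarrow> nat \<Rightarrow> nat \<Rightarrow> rmat" where
  "Mblk N n q k q' =
     (if n = N then
        (if q = 1 \<and> k = 1 \<and> q' = 1 then Pm
         else if q = 1 \<and> k = 1 \<and> q' = 2 then Qm
         else if q = 1 \<and> k = 2 \<and> q' = 1 then Qm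
         else Zm)
      else if n = 1 then
        (if q = 1 \<and> k = 1 \<and> q' = 1 then Qm
         else if q = 2 \<and> k = 1 \<and> q' = 1 then Rm
         else if q = 2 \<and> k = 2 \<and> q' = 1 then Pm
         else Zm)
      else
        (if k = 1 then
           (if q = 1 \<and> q' = 1 then Pm
            else if q = 1 \<and> q' = 2 then Qm
            else if q = 2 \<and> q' = 2 then Rm
            else Zm)
         else if k = 2 then
           (if q = 1 \<and> q' = 1 then Qm
            else if q = 2 \<and> q' = 1 then Rm
            else if q = 2 \<and> q' = 2 then Pm
            else Zm)
         else Zm))"

definition Hcore :: "nat \<Rightarrow> (nat \<Rightarrow> nat \<Rightarrow> nat \<Rightarrow> nat \<Rightarrow> real) \<Rightarrow> nat
                      \<Rightarrow> nat \<times> nat \<Rightarrow> nat \<times> nat \<Rightarrow> rmat" where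
  "Hcore N s n t t' = (\<lambda>a b. \<Sum>k\<in>{1,2}. s n (fst t') k (fst t) * Mblk N n (snd t) k (snd t') a b)"

text \<open>Kronecker product A (x) B where B has mB rows and nB columns
(index of B varies fastest).\<close>
definition kron :: "nat \<Rightarrow> nat \<Rightarrow> rmat \<Rightarrow> rmat \<Rightarrow> rmat" where
  "kron mB nB A B = (\<lambda>i j. A (i div mB) (j div nB) * B (i mod mB) (j mod nB))"

fun kron_list :: "rmat list \<Rightarrow> rmat" where
  "kron_list [] = (\<lambda>i j. if i = 0 \<and> j = 0 then 1 else 0)"
| "kron_list (A # As) = kron (2 ^ length As) (2 ^ length As) A (kron_list As)"

definition t_idx :: "nat \<Rightarrow> (nat \<Rightarrow> nat) \<Rightarrow> (nat \<Rightarrow> nat \<times> nat) set" where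
  "t_idx N R = {t. t 0 = (1, 1) \<and> t N = (1, 1)
                   \<and> (\<forall>n. 0 < n \<and> n < N \<longrightarrow> t n \<in> {1..R n} \<times> {1, 2})
                   \<and> (\<forall>n>N. t n = (1, 1))}"

end

theory Submission
  imports Defs "HOL-Library.FuncSet"
begin

text \<open>
  Expanding the Kronecker products entrywise, the (i, j) entry of the right-hand side is a sum over
  TT ranks r, carry indices q and multi-indices k of the TT product for (r, k) times the product over
  n of the entries of the blocks M^{(n)}_{q_n,k_n,q_{n-1}} at the n-th binary digits a_n, b_n of i and j.
  Such an entry is 1 exactly when a_n + b_n + (k_n - 1) + c_{n-1} = 1 + 2 c_n with c_n = q_n - 1 and
  c_0 = 1: the blocks are a full adder whose output digit is always 1. Hence the product over n is the
  indicator that c is the carry sequence of the binary addition i + j + (k - 1) + 1 = 2^N - 1, and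
  such a carry sequence is unique when it exists. Summing over q leaves the indicator of
  i + j + (k - 1) + 2 = 2^N, which singles out the multi-index of the Hankel entry s_{2^N-1-i-j}
  (with 0-based i, j).
\<close>

section \<open>Binary digits\<close>

definition digit :: "nat \<Rightarrow> nat \<Rightarrow> nat" where
  "digit x n = x div 2 ^ (n - 1) mod 2"

definition binval :: "(nat \<Rightarrow> nat) \<Rightarrow> nat \<Rightarrow> nat" where
  "binval d m = (\<Sum>n = 1..m. d n * 2 ^ (n - 1))"

lemma digit_less_2: "digit x n < 2"
  by (simp add: digit_def)

lemma mod_pow2_Suc: "x mod 2 ^ Suc m = x mod 2 ^ m + digit x (Suc m) * 2 ^ m"
  using mod_mult2_eq[of x "2 ^ m" 2] by (simp add: digit_def power_Suc2 mult.commute)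

lemma digit_Suc_eq: "digit x (Suc p) = x mod 2 ^ Suc p div 2 ^ p"
  unfolding mod_pow2_Suc by (simp add: digit_def)

lemma digit_mod_pow2:
  assumes "0 < n" "n \<le> L"
  shows "digit (x mod 2 ^ L) n = digit x n"
proof -
  have "L = (n - 1) + Suc (L - n)"
    using assms by simp
  then have "(2::nat) ^ L = 2 ^ (n - 1) * (2 * 2 ^ (L - n))"
    by (metis power_add power_Suc)
  then have "x mod 2 ^ L div 2 ^ (n - 1) = x div 2 ^ (n - 1) mod (2 * 2 ^ (L - n))"
    by (simp add: mod_mult2_eq)
  then show ?thesis
    by (simp add: digit_def mod_mult2_eq)
qed

lemma binval_0 [simp]: "binval d 0 = 0"
  by (simp add: binval_def)

lemma binval_Suc: "binval d (Suc m) = binval d m + d (Suc m) * 2 ^ m"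
  by (simp add: binval_def)

lemma binval_add: "binval (\<lambda>n. f n + g n) m = binval f m + binval g m"
  by (simp add: binval_def algebra_simps sum.distrib)

lemma binval_digit: "binval (digit x) m = x mod 2 ^ m"
proof (induction m)
  case (Suc m)
  show ?case
    unfolding binval_Suc mod_pow2_Suc Suc.IH ..
qed simp

lemma binval_le:
  assumes "\<forall>n\<in>{1..m}. d n \<le> b"
  shows "binval d m \<le> b * (2 ^ m - 1)"
  using assms
proof (induction m)
  case (Suc m)
  then have "binval d m \<le> b * (2 ^ m - 1)" "d (Suc m) * 2 ^ m \<le> b * 2 ^ m"
    by simp_all
  moreover have "b * (2 ^ m - 1) + b * 2 ^ m = b * (2 ^ Suc m - 1)"
    by (simp add: algebra_simps)
  ultimately show ?case
    unfolding binval_Suc by linarith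
qed simp

lemma binval_prefix: "m \<le> M \<Longrightarrow> \<exists>X. binval d M = binval d m + 2 ^ m * X"
proof (induction M)
  case (Suc M)
  show ?case
  proof (cases "m = Suc M")
    case False
    with Suc obtain X where "binval d M = binval d m + 2 ^ m * X"
      by auto
    moreover have "(2::nat) ^ M = 2 ^ m * 2 ^ (M - m)"
      using False Suc.prems by (simp flip: power_add)
    ultimately have "binval d (Suc M) = binval d m + 2 ^ m * (X + d (Suc M) * 2 ^ (M - m))"
      by (simp add: binval_Suc algebra_simps)
    then show ?thesis ..
  qed auto
qed simp

lemma binval_less:
  assumes "\<forall>n\<in>{1..m}. d n < 2"
  shows "binval d m < 2 ^ m"
proof -
  have "binval d m \<le> 2 ^ m - 1"
    using binval_le[of m d 1] assms by fastforce
  then show ?thesis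
    using one_le_power[of "2::nat" m] by linarith
qed

lemma digit_binval:
  assumes "\<forall>n\<in>{1..M}. d n < 2" and "n \<in> {1..M}"
  shows "digit (binval d M) n = d n"
proof -
  obtain p where p: "n = Suc p"
    using assms(2) by (cases n) auto
  have "binval d n < 2 ^ n" "binval d p < 2 ^ p"
    by (rule binval_less; use assms p in auto)+
  moreover obtain X where "binval d M = binval d n + 2 ^ n * X"
    using binval_prefix[of n M d] assms(2) by auto
  ultimately have "binval d M mod 2 ^ n = binval d p + d n * 2 ^ p"
    unfolding p binval_Suc by simp
  then show ?thesis
    unfolding p digit_Suc_eq using \<open>binval d p < 2 ^ p\<close> by simp
qed

lemma binval_eq_iff:
  assumes "k \<in> {1..N} \<rightarrow>\<^sub>E {1, 2}" and "c < 2 ^ N"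
  shows "binval (\<lambda>n. k n - 1) N = c \<longleftrightarrow> k = restrict (\<lambda>n. digit c n + 1) {1..N}"
proof
  assume c: "binval (\<lambda>n. k n - 1) N = c"
  show "k = restrict (\<lambda>n. digit c n + 1) {1..N}"
  proof (rule PiE_ext[OF assms(1)])
    show "restrict (\<lambda>n. digit c n + 1) {1..N} \<in> {1..N} \<rightarrow>\<^sub>E {1, 2}"
      using digit_less_2 by (auto simp: less_2_cases_iff)
    fix n assume n: "n \<in> {1..N}"
    have digits: "\<forall>m\<in>{1..N}. k m - 1 < 2"
      using PiE_mem[OF assms(1)] by fastforce
    show "k n = restrict (\<lambda>n. digit c n + 1) {1..N} n"
      using digit_binval[OF digits n] PiE_mem[OF assms(1) n] n c by auto
  qed
next
  assume "k = restrict (\<lambda>n. digit c n + 1) {1..N}"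
  then have "binval (\<lambda>n. k n - 1) N = binval (digit c) N"
    unfolding binval_def by (intro sum.cong) auto
  then show "binval (\<lambda>n. k n - 1) N = c"
    using assms(2) by (simp add: binval_digit)
qed

section \<open>Carry chains\<close>

definition carry_chain :: "(nat \<Rightarrow> nat) \<Rightarrow> (nat \<Rightarrow> nat) \<Rightarrow> nat \<Rightarrow> bool" where
  "carry_chain u e N \<longleftrightarrow> (\<forall>n\<in>{1..N}. u n + e (n - 1) = 1 + 2 * e n)"

lemma carry_step_iff:
  assumes "V' = V + u * 2 ^ m" and "V = 2 ^ m * (1 + x)"
  shows "V' = 2 ^ Suc m * (1 + y) \<longleftrightarrow> u + x = 1 + 2 * (y::nat)"
proof -
  have "V' = 2 ^ m * (1 + x + u)" "(2::nat) ^ Suc m * (1 + y) = 2 ^ m * (2 + 2 * y)"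
    using assms by (simp_all add: algebra_simps)
  moreover have "(2::nat) ^ m * (1 + x + u) = 2 ^ m * (2 + 2 * y) \<longleftrightarrow> 1 + x + u = 2 + 2 * y"
    by (subst mult_cancel_left) simp
  ultimately show ?thesis
    by arith
qed

text \<open>With initial carry 1, the first m result digits are all 1 iff
  binval u m + 1 = (2^m - 1) + 2^m * e m.\<close>

lemma carry_chain_iff:
  assumes "e 0 = 1"
  shows "carry_chain u e N \<longleftrightarrow> (\<forall>m\<le>N. binval u m + 2 = 2 ^ m * (1 + e m))"
proof
  assume chain: "carry_chain u e N"
  show "\<forall>m\<le>N. binval u m + 2 = 2 ^ m * (1 + e m)"
  proof (intro allI impI)
    fix m assume "m \<le> N"
    then show "binval u m + 2 = 2 ^ m * (1 + e m)"
    proof (induction m)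
      case (Suc m)
      have "u (Suc m) + e m = 1 + 2 * e (Suc m)"
        using chain Suc.prems unfolding carry_chain_def by force
      moreover have "binval u m + 2 = 2 ^ m * (1 + e m)"
        using Suc by simp
      ultimately show ?case
        using carry_step_iff[of "binval u (Suc m) + 2" "binval u m + 2" "u (Suc m)" m "e m" "e (Suc m)"]
        by (simp add: binval_Suc)
    qed (simp add: assms)
  qed
next
  assume inv: "\<forall>m\<le>N. binval u m + 2 = 2 ^ m * (1 + e m)"
  show "carry_chain u e N"
    unfolding carry_chain_def
  proof
    fix n assume "n \<in> {1..N}"
    then obtain p where p: "n = Suc p" "Suc p \<le> N"
      by (cases n) auto
    then have "binval u p + 2 = 2 ^ p * (1 + e p)" "binval u (Suc p) + 2 = 2 ^ Suc p * (1 + e (Suc p))"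
      using inv by simp_all
    then show "u n + e (n - 1) = 1 + 2 * e n"
      using carry_step_iff[of "binval u (Suc p) + 2" "binval u p + 2" "u (Suc p)" p "e p" "e (Suc p)"] p
      by (simp add: binval_Suc)
  qed
qed

lemma carry_chain_unique:
  assumes "carry_chain u e N" "carry_chain u e' N" "e 0 = 1" "e' 0 = 1" "m \<le> N"
  shows "e m = e' m"
  using assms carry_chain_iff[of e u N] carry_chain_iff[of e' u N] by simp

lemma carry_chain_cong:
  assumes "\<And>m. m \<le> N \<Longrightarrow> e m = e' m"
  shows "carry_chain u e N \<longleftrightarrow> carry_chain u e' N"
proof -
  have "u n + e (n - 1) = 1 + 2 * e n \<longleftrightarrow> u n + e' (n - 1) = 1 + 2 * e' n" if "n \<in> {1..N}" for n
    using that assms[of n] assms[of "n - 1"] by (simp add: le_diff_conv)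
  then show ?thesis
    unfolding carry_chain_def by blast
qed

lemma carry_chain_exists:
  assumes "\<forall>n\<in>{1..N}. u n \<le> 3" and "binval u N + 2 = 2 ^ N"
  shows "\<exists>e. e 0 = 1 \<and> e N = 0 \<and> (\<forall>m\<le>N. e m \<le> 1) \<and> carry_chain u e N"
proof -
  define e where "e m = (binval u m + 2) div 2 ^ m - 1" for m
  have "binval u m + 2 = 2 ^ m * (1 + e m) \<and> e m \<le> 1" if m: "m \<le> N" for m
  proof -
    obtain X where "binval u N = binval u m + 2 ^ m * X"
      using binval_prefix[OF m] by blast
    moreover have "(2::nat) ^ m dvd 2 ^ N"
      using m by (simp add: le_imp_power_dvd)
    ultimately have "2 ^ m dvd (binval u m + 2) + 2 ^ m * X"
      using assms(2) by (simp add: add.commute add.left_commute)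
    then have dvd: "2 ^ m dvd binval u m + 2"
      using dvd_add_times_triv_right_iff[of "2 ^ m" "binval u m + 2" X] by (simp add: mult.commute)
    then have "2 ^ m \<le> binval u m + 2"
      by (simp add: dvd_imp_le)
    moreover have "binval u m + 2 < 3 * 2 ^ m"
    proof -
      have "binval u m \<le> 3 * (2 ^ m - 1)"
        using binval_le[of m u 3] assms(1) m by simp
      moreover have "(1::nat) \<le> 2 ^ m"
        by simp
      ultimately show ?thesis
        by linarith
    qed
    ultimately have "1 \<le> (binval u m + 2) div 2 ^ m" "(binval u m + 2) div 2 ^ m < 3"
      by (simp_all add: div_greater_zero_iff Suc_le_eq less_mult_imp_div_less)
    with dvd show ?thesis
      unfolding e_def by simp
  qed
  moreover have "e 0 = 1" "e N = 0"
    using assms(2) by (simp_all add: e_def)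
  ultimately show ?thesis
    using carry_chain_iff[of e u N] by blast
qed

definition q_idx :: "nat \<Rightarrow> (nat \<Rightarrow> nat) set" where
  "q_idx N = {q. q 0 = 1 \<and> q N = 1 \<and> (\<forall>n. 0 < n \<and> n < N \<longrightarrow> q n \<in> {1, 2}) \<and> (\<forall>n>N. q n = 1)}"

text \<open>q n \<in> {1, 2} encodes the carry 0 or 1 out of digit n. The carry into digit 1 is always 1
  (the paper's q_0 = 1 is only a placeholder); it accounts for the entry H_{ij} (0-based) being s_m
  with (m - 1) + i + j + 2 = 2^N.\<close>

definition carry :: "(nat \<Rightarrow> nat) \<Rightarrow> nat \<Rightarrow> nat" where
  "carry q n = (if n = 0 then 1 else q n - 1)"

lemma q_idx_range: "q \<in> q_idx N \<Longrightarrow> m \<le> N \<Longrightarrow> q m \<in> {1, 2}"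
  by (cases "m = 0 \<or> m = N") (auto simp: q_idx_def)

lemma q_idx_outside: "q \<in> q_idx N \<Longrightarrow> \<not> (0 < n \<and> n < N) \<Longrightarrow> q n = 1"
  by (cases "n = 0 \<or> n = N") (auto simp: q_idx_def)

lemma finite_q_idx: "finite (q_idx N)"
proof (rule finite_subset)
  show "q_idx N \<subseteq> {q. \<forall>n. (n \<in> {1..<N} \<longrightarrow> q n \<in> {1, 2}) \<and> (n \<notin> {1..<N} \<longrightarrow> q n = 1)}"
  proof (intro subsetI CollectI allI conjI impI)
    fix q n assume q: "q \<in> q_idx N"
    show "q n \<in> {1, 2}" if "n \<in> {1..<N}"
      using q that by (simp add: q_idx_def)
    show "q n = 1" if "n \<notin> {1..<N}"
      using q_idx_outside[OF q, of n] that by auto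
  qed
  show "finite \<dots>"
    by (rule finite_set_of_finite_funs) auto
qed

lemma carry_chain_q_idx_unique:
  assumes "q \<in> q_idx N" "q' \<in> q_idx N" "carry_chain u (carry q) N" "carry_chain u (carry q') N"
  shows "q = q'"
proof
  fix m
  show "q m = q' m"
  proof (cases "0 < m \<and> m < N")
    case True
    then have "carry q m = carry q' m"
      using carry_chain_unique[OF assms(3,4), of m] by (simp add: carry_def)
    then show ?thesis
      using True q_idx_range[OF assms(1), of m] q_idx_range[OF assms(2), of m] by (auto simp: carry_def)
  next
    case False
    then show ?thesis
      using q_idx_outside[OF assms(1)] q_idx_outside[OF assms(2)] by simp
  qed
qed

lemma carry_chain_q_idx_exists:
  assumes "\<forall>n\<in>{1..N}. u n \<le> 3" and "binval u N + 2 = 2 ^ N"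
  shows "\<exists>q\<in>q_idx N. carry_chain u (carry q) N"
proof -
  obtain e where e: "e 0 = 1" "e N = 0" "\<forall>m\<le>N. e m \<le> 1" "carry_chain u e N"
    using carry_chain_exists[OF assms] by blast
  define q where "q n = (if 0 < n \<and> n < N then e n + 1 else 1)" for n
  have "e n + 1 \<in> {1, 2}" if "n < N" for n
    using e(3)[rule_format, of n] that by auto
  then have "q \<in> q_idx N"
    by (simp add: q_idx_def q_def)
  moreover have "carry q m = e m" if "m \<le> N" for m
    using that e(1,2) by (auto simp: carry_def q_def)
  then have "carry_chain u (carry q) N"
    using e(4) carry_chain_cong by blast
  ultimately show ?thesis
    by blast
qed

lemma carry_chain_q_idx_sum:
  assumes "0 < N" "q \<in> q_idx N" "carry_chain u (carry q) N"
  shows "binval u N + 2 = 2 ^ N"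
proof -
  have "carry q 0 = 1" "carry q N = 0"
    using assms(1,2) by (simp_all add: carry_def q_idx_def)
  then show ?thesis
    using assms(3) carry_chain_iff[of "carry q" u N] by auto
qed

lemma card_carry_chains:
  assumes "0 < N" and "\<forall>n\<in>{1..N}. u n \<le> 3"
  shows "card (q_idx N \<inter> {q. carry_chain u (carry q) N}) = of_bool (binval u N + 2 = 2 ^ N)"
proof (cases "binval u N + 2 = 2 ^ N")
  case True
  then obtain q0 where "q0 \<in> q_idx N" "carry_chain u (carry q0) N"
    using carry_chain_q_idx_exists assms(2) by blast
  then have "q_idx N \<inter> {q. carry_chain u (carry q) N} = {q0}"
    using carry_chain_q_idx_unique by blast
  then show ?thesis
    using True by simp
next
  case False
  then have "q_idx N \<inter> {q. carry_chain u (carry q) N} = {}"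
    using carry_chain_q_idx_sum[OF assms(1)] by blast
  then show ?thesis
    using False by simp
qed

section \<open>The blocks as a full adder\<close>

lemma prod_of_bool:
  "finite A \<Longrightarrow> (\<Prod>x\<in>A. of_bool (P x)) = (of_bool (\<forall>x\<in>A. P x) :: 'a::comm_semiring_1)"
  by (induction A rule: finite_induct) auto

lemma Mblk_full_adder:
  assumes "2 \<le> N" "n \<in> {1..N}" "k \<in> {1, 2}" "q \<in> {1, 2}" "q' \<in> {1, 2}"
    and "n = 1 \<longrightarrow> q' = 1" "n = N \<longrightarrow> q = 1" "a < 2" "b < 2"
  shows "Mblk N n q k q' a b
    = of_bool (a + b + (k - 1) + (if n = 1 then 1 else q' - 1) = 1 + 2 * (q - 1))"
proof -
  have "a = 0 \<or> a = 1" "b = 0 \<or> b = 1" "k = 1 \<or> k = 2" "q = 1 \<or> q = 2" "q' = 1 \<or> q' = 2"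
    using assms(3-5,8,9) by auto
  then show ?thesis
    using assms(1,2,6,7)
    by (elim disjE) (simp_all add: Mblk_def Pm_def Qm_def Rm_def Zm_def)
qed

lemma prod_Mblk_eq_carry_chain:
  assumes "2 \<le> N" "q \<in> q_idx N" "k \<in> {1..N} \<rightarrow>\<^sub>E {1, 2}"
  shows "(\<Prod>n = 1..N. Mblk N n (q n) (k n) (q (n - 1)) (digit i n) (digit j n))
    = (of_bool (carry_chain (\<lambda>n. digit i n + digit j n + (k n - 1)) (carry q) N) :: real)"
proof -
  have "Mblk N n (q n) (k n) (q (n - 1)) (digit i n) (digit j n)
      = of_bool (digit i n + digit j n + (k n - 1) + carry q (n - 1) = 1 + 2 * carry q n)"
    if n: "n \<in> {1..N}" for n
  proof -
    have "q n \<in> {1, 2}" "q (n - 1) \<in> {1, 2}" "n = 1 \<longrightarrow> q (n - 1) = 1" "n = N \<longrightarrow> q n = 1"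
      using n assms(2) q_idx_range[of q N n] q_idx_range[of q N "n - 1"] by (auto simp: q_idx_def)
    moreover have "k n \<in> {1, 2}"
      using PiE_mem[OF assms(3) n] .
    ultimately show ?thesis
      using Mblk_full_adder[OF assms(1) n _ _ _ _ _ digit_less_2 digit_less_2] n
      by (auto simp: carry_def)
  qed
  then have "(\<Prod>n = 1..N. Mblk N n (q n) (k n) (q (n - 1)) (digit i n) (digit j n))
      = (\<Prod>n = 1..N. of_bool (digit i n + digit j n + (k n - 1) + carry q (n - 1) = 1 + 2 * carry q n))"
    by (rule prod.cong[OF refl])
  then show ?thesis
    by (simp add: prod_of_bool carry_chain_def)
qed

lemma sum_q_idx_prod_Mblk:
  assumes "2 \<le> N" "i < 2 ^ N" "j < 2 ^ N" "k \<in> {1..N} \<rightarrow>\<^sub>E {1, 2}"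
  shows "(\<Sum>q\<in>q_idx N. \<Prod>n = 1..N. Mblk N n (q n) (k n) (q (n - 1)) (digit i n) (digit j n))
    = of_bool (i + j + binval (\<lambda>n. k n - 1) N + 2 = 2 ^ N)"
proof -
  define u where "u = (\<lambda>n. digit i n + digit j n + (k n - 1))"
  have "\<forall>n\<in>{1..N}. u n \<le> 3"
  proof
    fix n assume "n \<in> {1..N}"
    have "k n \<le> 2"
      using PiE_mem[OF assms(4) \<open>n \<in> {1..N}\<close>] by auto
    then show "u n \<le> 3"
      using digit_less_2[of i n] digit_less_2[of j n] unfolding u_def by linarith
  qed
  have "binval u N = i + j + binval (\<lambda>n. k n - 1) N"
    using assms(2,3) by (simp add: u_def binval_add binval_digit)
  have "(\<Sum>q\<in>q_idx N. \<Prod>n = 1..N. Mblk N n (q n) (k n) (q (n - 1)) (digit i n) (digit j n))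
      = (\<Sum>q\<in>q_idx N. of_bool (carry_chain u (carry q) N))"
    unfolding u_def by (rule sum.cong[OF refl]) (rule prod_Mblk_eq_carry_chain[OF assms(1) _ assms(4)])
  also have "\<dots> = of_nat (card (q_idx N \<inter> {q. carry_chain u (carry q) N}))"
    by (simp add: finite_q_idx)
  also have "\<dots> = of_bool (binval u N + 2 = 2 ^ N)"
    using card_carry_chains[of N u] \<open>\<forall>n\<in>{1..N}. u n \<le> 3\<close> assms(1) by simp
  finally show ?thesis
    unfolding \<open>binval u N = i + j + binval (\<lambda>n. k n - 1) N\<close> .
qed

section \<open>Both sides as sums over multi-indices\<close>

lemma tt_entry_cong:
  "(\<And>n. n \<in> {1..N} \<Longrightarrow> k n = k' n) \<Longrightarrow> tt_entry N R s k = tt_entry N R s k'"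
  unfolding tt_entry_def by (intro sum.cong prod.cong) auto

lemma hankel_eq_sum_tt_entry:
  assumes "i < 2 ^ N" "j < 2 ^ N"
  shows "hankel N R s i j = (\<Sum>k \<in> {1..N} \<rightarrow>\<^sub>E {1, 2}.
           tt_entry N R s k * of_bool (i + j + binval (\<lambda>n. k n - 1) N + 2 = 2 ^ N))"
proof (cases "i + j + 2 \<le> 2 ^ N")
  case True
  define c where "c = 2 ^ N - 2 - i - j"
  define k0 where "k0 = restrict (\<lambda>n. digit c n + 1) {1..N}"
  have "c < 2 ^ N"
    using True by (simp add: c_def)
  have k0: "k0 \<in> {1..N} \<rightarrow>\<^sub>E {1, 2}"
    using digit_less_2 by (auto simp: k0_def less_2_cases_iff)
  have "({1..N} \<rightarrow>\<^sub>E {1, 2}) \<inter> {k. i + j + binval (\<lambda>n. k n - 1) N + 2 = 2 ^ N} = {k0}"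
  proof -
    have "i + j + binval (\<lambda>n. k n - 1) N + 2 = 2 ^ N \<longleftrightarrow> k = k0"
      if "k \<in> {1..N} \<rightarrow>\<^sub>E {1, 2}" for k
      using binval_eq_iff[OF that \<open>c < 2 ^ N\<close>] True by (auto simp: c_def k0_def)
    then show ?thesis
      using k0 by blast
  qed
  then have "(\<Sum>k \<in> {1..N} \<rightarrow>\<^sub>E {1, 2}.
      tt_entry N R s k * of_bool (i + j + binval (\<lambda>n. k n - 1) N + 2 = 2 ^ N)) = tt_entry N R s k0"
    by (subst sum_mult_of_bool_eq) (simp_all add: finite_PiE)
  moreover have "multi_idx (2 ^ N + 1 - (i + 1) - (j + 1)) n = k0 n" if "n \<in> {1..N}" for n
    using that by (simp add: multi_idx_def k0_def digit_def c_def diff_diff_add)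
  then have "hankel N R s i j = tt_entry N R s k0"
    using True unfolding hankel_def svec_def by (auto intro: tt_entry_cong)
  ultimately show ?thesis
    by simp
qed (auto simp: hankel_def)

lemma kron_list_entry:
  assumes "i < 2 ^ L" "j < 2 ^ L"
  shows "kron_list (map f (rev [1..<L + 1])) i j = (\<Prod>n = 1..L. f n (digit i n) (digit j n))"
  using assms
proof (induction L arbitrary: i j)
  case (Suc L)
  have high: "i div 2 ^ L = digit i (Suc L)" "j div 2 ^ L = digit j (Suc L)"
    using Suc.prems by (simp_all add: digit_def less_mult_imp_div_less mult.commute)
  have low: "kron_list (map f (rev [1..<L + 1])) (i mod 2 ^ L) (j mod 2 ^ L)
      = (\<Prod>n = 1..L. f n (digit i n) (digit j n))"
  proof -
    have "(\<Prod>n = 1..L. f n (digit (i mod 2 ^ L) n) (digit (j mod 2 ^ L) n))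
        = (\<Prod>n = 1..L. f n (digit i n) (digit j n))"
      by (rule prod.cong) (simp_all add: digit_mod_pow2)
    then show ?thesis
      using Suc.IH[of "i mod 2 ^ L" "j mod 2 ^ L"] by simp
  qed
  have "rev [1..<Suc L + 1] = Suc L # rev [1..<L + 1]"
    by simp
  then have "kron_list (map f (rev [1..<Suc L + 1])) i j
      = f (Suc L) (i div 2 ^ L) (j div 2 ^ L) * kron_list (map f (rev [1..<L + 1])) (i mod 2 ^ L) (j mod 2 ^ L)"
    by (simp only: list.map kron_list.simps length_map length_rev length_upt kron_def) simp
  then show ?case
    unfolding high low by (simp add: mult.commute)
qed simp

lemma kron_Hcore_entry:
  assumes "i < 2 ^ N" "j < 2 ^ N"
  shows "kron_list (map (\<lambda>n. Hcore N s n (t n) (t (n - 1))) (rev [1..<N + 1])) i j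
    = (\<Sum>k \<in> {1..N} \<rightarrow>\<^sub>E {1, 2}.
         (\<Prod>n = 1..N. s n (fst (t (n - 1))) (k n) (fst (t n)))
       * (\<Prod>n = 1..N. Mblk N n (snd (t n)) (k n) (snd (t (n - 1))) (digit i n) (digit j n)))"
proof -
  have "kron_list (map (\<lambda>n. Hcore N s n (t n) (t (n - 1))) (rev [1..<N + 1])) i j
      = (\<Prod>n = 1..N. \<Sum>k\<in>{1, 2}. s n (fst (t (n - 1))) k (fst (t n))
                                  * Mblk N n (snd (t n)) k (snd (t (n - 1))) (digit i n) (digit j n))"
    using kron_list_entry[OF assms] by (simp add: Hcore_def)
  also have "\<dots> = (\<Sum>k \<in> {1..N} \<rightarrow>\<^sub>E {1, 2}. \<Prod>n = 1..N. s n (fst (t (n - 1))) (k n) (fst (t n))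
                                  * Mblk N n (snd (t n)) (k n) (snd (t (n - 1))) (digit i n) (digit j n))"
    by (rule prod_sum_PiE) auto
  finally show ?thesis
    by (simp add: prod.distrib)
qed

lemma t_idx_reindex:
  "(\<Sum>t\<in>t_idx N R. F t) = (\<Sum>r\<in>tt_ranks N R. \<Sum>q\<in>q_idx N. F (\<lambda>n. (r n, q n)))"
proof -
  let ?pair = "\<lambda>(r, q) n. (r n :: nat, q n :: nat)"
  have "t_idx N R = ?pair ` (tt_ranks N R \<times> q_idx N)"
  proof (intro equalityI subsetI)
    fix t assume "t \<in> t_idx N R"
    then have "(fst \<circ> t, snd \<circ> t) \<in> tt_ranks N R \<times> q_idx N"
      by (auto simp: t_idx_def tt_ranks_def q_idx_def mem_Times_iff)
    moreover have "t = ?pair (fst \<circ> t, snd \<circ> t)"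
      by simp
    ultimately show "t \<in> ?pair ` (tt_ranks N R \<times> q_idx N)"
      by blast
  qed (auto simp: t_idx_def tt_ranks_def q_idx_def)
  moreover have "inj_on ?pair (tt_ranks N R \<times> q_idx N)"
    by (auto simp: inj_on_def fun_eq_iff)
  ultimately show ?thesis
    by (simp add: sum.reindex sum.cartesian_product split_def)
qed

theorem mainTheorem6:
  fixes N :: nat and R :: "nat \<Rightarrow> nat"
    and s :: "nat \<Rightarrow> nat \<Rightarrow> nat \<Rightarrow> nat \<Rightarrow> real"
  assumes "N \<ge> 2" and "R 0 = 1" and "R N = 1"
  shows "\<forall>i < 2 ^ N. \<forall>j < 2 ^ N.
           hankel N R s i j =
           (\<Sum>t\<in>t_idx N R.
              kron_list (map (\<lambda>n. Hcore N s n (t n) (t (n - 1))) (rev [1..<N+1])) i j)"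
proof (intro allI impI)
  fix i j :: nat assume i: "i < 2 ^ N" and j: "j < 2 ^ N"
  let ?K = "{1..N} \<rightarrow>\<^sub>E {1, 2::nat}"
  define S where "S r k = (\<Prod>n = 1..N. s n (r (n - 1)) (k n) (r n))" for r k
  define M where "M q k = (\<Prod>n = 1..N. Mblk N n (q n) (k n) (q (n - 1)) (digit i n) (digit j n))" for q k
  have "(\<Sum>t\<in>t_idx N R. kron_list (map (\<lambda>n. Hcore N s n (t n) (t (n - 1))) (rev [1..<N+1])) i j)
      = (\<Sum>r\<in>tt_ranks N R. \<Sum>q\<in>q_idx N. \<Sum>k\<in>?K. S r k * M q k)"
    unfolding t_idx_reindex kron_Hcore_entry[OF i j] by (simp add: S_def M_def)
  also have "\<dots> = (\<Sum>r\<in>tt_ranks N R. \<Sum>k\<in>?K. \<Sum>q\<in>q_idx N. S r k * M q k)"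
    by (rule sum.cong[OF refl], rule sum.swap)
  also have "\<dots> = (\<Sum>k\<in>?K. (\<Sum>r\<in>tt_ranks N R. S r k) * (\<Sum>q\<in>q_idx N. M q k))"
    by (subst sum.swap) (simp add: sum_product)
  also have "\<dots> = (\<Sum>k\<in>?K. tt_entry N R s k * of_bool (i + j + binval (\<lambda>n. k n - 1) N + 2 = 2 ^ N))"
    using sum_q_idx_prod_Mblk[OF assms(1) i j] by (simp add: tt_entry_def S_def M_def)
  also have "\<dots> = hankel N R s i j"
    using hankel_eq_sum_tt_entry[OF i j] by simp
  finally show "hankel N R s i j = (\<Sum>t\<in>t_idx N R.
      kron_list (map (\<lambda>n. Hcore N s n (t n) (t (n - 1))) (rev [1..<N+1])) i j)"
    by simp
qed

end
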